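(* For every nonnegative integer $n$, $$\sum_{k=0}^{\infty}(-1)^k(4k+1)\,\frac{(-3n)_k\,(-4n-\tfrac16)_k\,(\tfrac12)_k}{k!\,(3n+\tfrac32)_k\,(4n+\tfrac53)_k}=\left(\frac{2^8 3^3}{7^7}\right)^n\frac{(\tfrac{11}{12})_n(\tfrac56)_n(\tfrac12)_n(\tfrac{5}{12})_n(\tfrac76)_n^2}{(\tfrac{11}{21})_n(\tfrac{23}{21})_n(\tfrac{5}{21})_n(\tfrac{17}{21})_n(\tfrac{8}{21})_n(\tfrac{20}{21})_n}.$$ (The sum is finite, since $(-3n)_k=0$ for $k>3n$.)
   Context: $(a)_j=\Gamma(a+j)/\Gamma(a)=a(a+1)\cdots(a+j-1)$ denotes the rising factorial (Pochhammer symbol), with $(a)_0=1$. *)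

theory Defs
  imports Complex_Main
begin

end

theory Submission
  imports Defs
begin

(*
  Proof by creative telescoping (Zeilberger's method).

  Write x = n.  The summand is F(n,k) = (4k+1) h(-3x, -4x-1/6; 3x+3/2, 4x+5/3; k), where
  h(a,b;c,d;k) = (-1)^k (a)_k (b)_k (1/2)_k / (k! (c)_k (d)_k), and F(n,k) = 0 for k > 3n,
  so S(n) = sum_k F(n,k) is a finite sum.  Let c(n) = RHS(n+1)/RHS(n).  We exhibit an
  explicit rational certificate G(n,k) with

      F(n+1,k) - c(n) F(n,k) = G(n,k+1) - G(n,k),      G(n,0) = 0 = G(n,3n+4).

  Summing over k gives S(n+1) = c(n) S(n); since also RHS(n+1) = c(n) RHS(n) and
  S(0) = 1 = RHS(0), induction yields S(n) = RHS(n).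

  Both F(n,k) and F(n+1,k) are rational multiples of the single hypergeometric term
  B(n,k) = h(-3x-3, -4x-25/6; 3x+9/2, 4x+17/3; k) (contiguity of Pochhammer symbols), so
  the telescoping identity reduces to a polynomial identity in x and k, checked by 'algebra'.
*)

definition hterm :: "real \<Rightarrow> real \<Rightarrow> real \<Rightarrow> real \<Rightarrow> nat \<Rightarrow> real" where
  "hterm a b c d k = (-1) ^ k * (pochhammer a k * pochhammer b k * pochhammer (1/2) k)
                     / (fact k * pochhammer c k * pochhammer d k)"

lemma hterm_Suc:
  "hterm a b c d (Suc k) =
     hterm a b c d k * (- ((a + k) * (b + k) * (1/2 + k))) / ((k + 1) * (c + k) * (d + k))"
  unfolding hterm_def pochhammer_Suc fact_Suc power_Suc times_divide_times_eq
  by (simp add: ac_simps)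

lemma hterm_terminates: "m < k \<Longrightarrow> hterm (- of_nat m) b c d k = 0"
  unfolding hterm_def by (simp add: pochhammer_of_nat_eq_0_lemma)

lemma pochhammer_swap:
  fixes a :: "'a::comm_semiring_1"
  shows "pochhammer a m * pochhammer (a + of_nat m) k = pochhammer a k * pochhammer (a + of_nat k) m"
  by (metis pochhammer_product' add.commute)

text \<open>Shifting a, b up by 3, 4 and c, d down by 3, 4 multiplies the term by a polynomial
  in k, namely the following product (normalized by its value at k = 0).\<close>

definition shift_factor :: "real \<Rightarrow> real \<Rightarrow> real \<Rightarrow> real \<Rightarrow> real \<Rightarrow> real" where
  "shift_factor a b c d k =
     pochhammer (a + k) 3 * pochhammer (b + k) 4 * pochhammer (c + k) 3 * pochhammer (d + k) 4"

lemma hterm_contiguous: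
  assumes "c > 0" "d > 0"
  shows "hterm (a + 3) (b + 4) c d k * shift_factor a b c d 0
       = hterm a b (c + 3) (d + 4) k * shift_factor a b c d k"
proof -
  have swap3: "pochhammer u 3 * pochhammer (u + 3) k = pochhammer u k * pochhammer (u + k) 3"
    for u :: real
    using pochhammer_swap[of u 3 k] by simp
  have swap4: "pochhammer u 4 * pochhammer (u + 4) k = pochhammer u k * pochhammer (u + k) 4"
    for u :: real
    using pochhammer_swap[of u 4 k] by simp
  have pos: "fact k > (0::real)" "pochhammer c k > 0" "pochhammer d k > 0"
    "pochhammer (c + 3) k > 0" "pochhammer (d + 4) k > 0"
    using assms by (auto intro!: pochhammer_pos)
  have ratio3: "pochhammer c 3 / pochhammer c k = pochhammer (c + k) 3 / pochhammer (c + 3) k"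
    using swap3[of c] pos by (simp add: divide_simps mult.commute)
  have ratio4: "pochhammer d 4 / pochhammer d k = pochhammer (d + k) 4 / pochhammer (d + 4) k"
    using swap4[of d] pos by (simp add: divide_simps mult.commute)
  define s :: real where "s = (-1) ^ k * pochhammer (1/2) k / fact k"
  have "hterm (a + 3) (b + 4) c d k * shift_factor a b c d 0
      = s * (pochhammer a 3 * pochhammer (a + 3) k) * (pochhammer b 4 * pochhammer (b + 4) k)
          * (pochhammer c 3 / pochhammer c k) * (pochhammer d 4 / pochhammer d k)"
    unfolding hterm_def shift_factor_def s_def using pos by (simp add: field_simps)
  also have "\<dots> = s * (pochhammer a k * pochhammer (a + k) 3) * (pochhammer b k * pochhammer (b + k) 4)
          * (pochhammer (c + k) 3 / pochhammer (c + 3) k) * (pochhammer (d + k) 4 / pochhammer (d + 4) k)"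
    unfolding swap3 swap4 ratio3 ratio4 ..
  also have "\<dots> = hterm a b (c + 3) (d + 4) k * shift_factor a b c d k"
    unfolding hterm_def shift_factor_def s_def using pos by (simp add: field_simps)
  finally show ?thesis .
qed

definition summand :: "nat \<Rightarrow> nat \<Rightarrow> real" where
  "summand n k = (4 * real k + 1) *
     hterm (- 3 * real n) (- 4 * real n - 1/6) (3 * real n + 3/2) (4 * real n + 5/3) k"

definition shifted :: "nat \<Rightarrow> nat \<Rightarrow> real" where
  "shifted n k = hterm (- 3 * real n - 3) (- 4 * real n - 25/6) (3 * real n + 9/2) (4 * real n + 17/3) k"

lemma summand_Suc: "summand (Suc n) k = (4 * real k + 1) * shifted n k"
proof -
  have "- 3 * real (Suc n) = - 3 * real n - 3" "- 4 * real (Suc n) - 1/6 = - 4 * real n - 25/6"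
       "3 * real (Suc n) + 3/2 = 3 * real n + 9/2" "4 * real (Suc n) + 5/3 = 4 * real n + 17/3"
    by simp_all
  then show ?thesis unfolding summand_def shifted_def by (simp only:)
qed

lemma summand_vanishes: "3 * n < k \<Longrightarrow> summand n k = 0"
  using hterm_terminates[of "3 * n" k] unfolding summand_def by simp

lemma shifted_vanishes:
  assumes "3 * n + 3 < k"
  shows "shifted n k = 0"
proof -
  have "- 3 * real n - 3 = - of_nat (3 * n + 3)" by simp
  then show ?thesis unfolding shifted_def using hterm_terminates[OF assms] by simp
qed

text \<open>The polynomials of the certificate, all with integer coefficients.  The quotient
  F(n,k)/B(n,k) is (4k+1) q(x,k)/q(x,0).\<close>

definition q_poly :: "real \<Rightarrow> real \<Rightarrow> real" where
  "q_poly x k = ((k-3*x-3)*(k-3*x-2)*(k-3*x-1)) * ((6*k-24*x-25)*(6*k-24*x-19)*(6*k-24*x-13)*(6*k-24*x-7))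
     * ((2*k+6*x+3)*(2*k+6*x+5)*(2*k+6*x+7)) * ((3*k+12*x+5)*(3*k+12*x+8)*(3*k+12*x+11)*(3*k+12*x+14))"

lemma q_poly_shift_factor:
  "q_poly x k = 839808 * shift_factor (- 3 * x - 3) (- 4 * x - 25/6) (3 * x + 3/2) (4 * x + 5/3) k"
proof -
  have p3: "pochhammer u 3 = u * (u + 1) * (u + 2)"
   and p4: "pochhammer u 4 = u * (u + 1) * (u + 2) * (u + 3)" for u :: real
    by (simp_all add: eval_nat_numeral pochhammer_Suc algebra_simps)
  have "(k-3*x-3)*(k-3*x-2)*(k-3*x-1) = pochhammer (- 3 * x - 3 + k) 3"
    unfolding p3 by (simp add: algebra_simps)
  moreover have "(6*k-24*x-25)*(6*k-24*x-19)*(6*k-24*x-13)*(6*k-24*x-7)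
                   = 1296 * pochhammer (- 4 * x - 25/6 + k) 4"
    unfolding p4 by (simp add: field_simps)
  moreover have "(2*k+6*x+3)*(2*k+6*x+5)*(2*k+6*x+7) = 8 * pochhammer (3 * x + 3/2 + k) 3"
    unfolding p3 by (simp add: field_simps)
  moreover have "(3*k+12*x+5)*(3*k+12*x+8)*(3*k+12*x+11)*(3*k+12*x+14)
                   = 81 * pochhammer (4 * x + 5/3 + k) 4"
    unfolding p4 by (simp add: field_simps)
  ultimately show ?thesis unfolding q_poly_def shift_factor_def by simp
qed

lemma q_poly_0_nonzero: "x \<ge> 0 \<Longrightarrow> q_poly x 0 \<noteq> 0"
  unfolding q_poly_def by auto

lemma summand_shifted:
  "summand n k * q_poly (real n) 0 = (4 * real k + 1) * shifted n k * q_poly (real n) k"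
proof -
  let ?x = "real n"
  have args: "- 3 * ?x - 3 + 3 = - 3 * ?x" "- 4 * ?x - 25/6 + 4 = - 4 * ?x - 1/6"
    "3 * ?x + 3/2 + 3 = 3 * ?x + 9/2" "4 * ?x + 5/3 + 4 = 4 * ?x + 17/3"
    by simp_all
  have contig: "hterm (- 3 * ?x - 3 + 3) (- 4 * ?x - 25/6 + 4) (3 * ?x + 3/2) (4 * ?x + 5/3) k
          * shift_factor (- 3 * ?x - 3) (- 4 * ?x - 25/6) (3 * ?x + 3/2) (4 * ?x + 5/3) 0
        = hterm (- 3 * ?x - 3) (- 4 * ?x - 25/6) (3 * ?x + 3/2 + 3) (4 * ?x + 5/3 + 4) k
          * shift_factor (- 3 * ?x - 3) (- 4 * ?x - 25/6) (3 * ?x + 3/2) (4 * ?x + 5/3) k"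
    by (rule hterm_contiguous) auto
  show ?thesis
    unfolding summand_def shifted_def q_poly_shift_factor args
    using arg_cong[OF contig[unfolded args], of "\<lambda>t. 839808 * (4 * real k + 1) * t"]
    by (simp add: mult_ac)
qed

text \<open>The quotient B(n,k+1)/B(n,k) is -r(x,k)/s(x,k+1).\<close>

definition r_poly :: "real \<Rightarrow> real \<Rightarrow> real" where
  "r_poly x k = (k-3*x-3)*(6*k-24*x-25)*(2*k+1)"

definition s_poly :: "real \<Rightarrow> real \<Rightarrow> real" where
  "s_poly x k = 2*k*(2*k+6*x+7)*(3*k+12*x+14)"

lemma s_poly_pos: "x \<ge> 0 \<Longrightarrow> k > 0 \<Longrightarrow> s_poly x k > 0"
  unfolding s_poly_def by simp

lemma shifted_Suc:
  "shifted n (Suc k) = shifted n k * (- r_poly (real n) k / s_poly (real n) (real k + 1))"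
proof -
  let ?x = "real n" and ?k = "real k"
  have pos: "?k + 1 > 0" "3 * ?x + 9/2 + ?k > 0" "4 * ?x + 17/3 + ?k > 0" "s_poly ?x (?k + 1) > 0"
    by (simp_all add: s_poly_pos)
  have step: "(- ((- 3 * ?x - 3 + ?k) * (- 4 * ?x - 25/6 + ?k) * (1/2 + ?k)))
          / ((?k + 1) * (3 * ?x + 9/2 + ?k) * (4 * ?x + 17/3 + ?k))
        = - r_poly ?x ?k / s_poly ?x (?k + 1)"
    using pos unfolding r_poly_def s_poly_def by (simp add: field_simps)
  show ?thesis
    unfolding shifted_def hterm_Suc times_divide_eq_right[symmetric] step ..
qed

text \<open>The ratio c(n) = RHS(n+1)/RHS(n) is 81/7 N(x)/E(x).\<close>

definition e_poly :: "real \<Rightarrow> real" where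
  "e_poly x = (21*x+11)*(21*x+23)*(21*x+5)*(21*x+17)*(21*x+8)*(21*x+20)"

definition n_poly :: "real \<Rightarrow> real" where
  "n_poly x = (12*x+11)*(6*x+5)*(2*x+1)*(12*x+5)*(6*x+7)*(6*x+7)"

lemma e_poly_nonzero: "x \<ge> 0 \<Longrightarrow> e_poly x \<noteq> 0"
  unfolding e_poly_def by auto

definition ratio :: "nat \<Rightarrow> real" where
  "ratio n = (2^8 * 3^3 / 7^7) *
       ((11/12 + real n) * (5/6 + real n) * (1/2 + real n) * (5/12 + real n) * (7/6 + real n)^2)
     / ((11/21 + real n) * (23/21 + real n) * (5/21 + real n) * (17/21 + real n)
        * (8/21 + real n) * (20/21 + real n))"

lemma ratio_eq: "ratio n = 81/7 * n_poly (real n) / e_poly (real n)"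
proof -
  let ?x = "real n"
  have "11/21 + ?x > 0" "23/21 + ?x > 0" "5/21 + ?x > 0" "17/21 + ?x > 0" "8/21 + ?x > 0"
       "20/21 + ?x > 0" "e_poly ?x > 0"
    unfolding e_poly_def by simp_all
  then show ?thesis
    unfolding ratio_def n_poly_def by (simp add: field_simps e_poly_def power2_eq_square)
qed

text \<open>The certificate polynomial Y(x,k) (found by Zeilberger's algorithm) and the
  polynomial identity it satisfies; this is the heart of the proof.\<close>

definition cert :: "real \<Rightarrow> real \<Rightarrow> real" where
  "cert x k = (56215869706920000 + 1838565516902730000 * x + 27958903146328120200 * x^2 + 262790177249306531520 * x^3 + 1711507933701189354384 * x^4 + 8205275155997611590264 * x^5 + 30020653839856936017888 * x^6 + 85737563928432531961272 * x^7 + 193830898306880012490576 * x^8 + 349586446611250537209576 * x^9 + 504353624924407670218080 * x^10 + 580857085151374038110208 * x^11 + 530215557116238128204928 * x^12 + 378514904705558898899328 * x^13 + 206740925258544851309568 * x^14 + 83386185946470630328320 * x^15 + 23394088052177367416832 * x^16 + 4074928344877221937152 * x^17 + 331748035896340905984 * x^18) + k * ((5525638092513000 + 156472689087102150 * x + 2054774333655346050 * x^2 + 16602602576141921868 * x^3 + 92360874615936074208 * x^4 + 375043387053062979504 * x^5 + 1149802477582923166248 * x^6 + 2714764092168756955680 * x^7 + 4988894386569425282232 * x^8 + 7159843528500829281120 * x^9 + 7998607330569410033664 * x^10 + 6883084218861078392448 * x^11 + 4473226704773527088256 * x^12 + 2122613243675220731904 * x^13 + 693632500592852146176 * x^14 +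 139480884414623711232 * x^15 + 13003855338440097792 * x^16) + k * (((-10225474316961750) + (-294051150957143475) * x + (-3909422279171363445) * x^2 + (-31906321613958771234) * x^3 + (-178957283729506807860) * x^4 + (-731599005886078112640) * x^5 + (-2255451286766201193600) * x^6 + (-5349810265327410693192) * x^7 + (-9868513493508953985936) * x^8 + (-14206567001914759662144) * x^9 + (-15910200670998801359232) * x^10 + (-13717957039124631705216) * x^11 + (-8928270652840843173120) * x^12 + (-4241049416813892483072) * x^13 + (-1386824124476864360448) * x^14 + (-278961768829247422464) * x^15 + (-26007710676880195584) * x^16) + k * (((-3210877374306525) + (-73885657554971640) * x + (-786302881870833432) * x^2 + (-5123326994589179052) * x^3 + (-22810660169527036584) * x^4 + (-73351448959452752016) * x^5 + (-175559179899337385112) * x^6 + (-317514591562765500288) * x^7 + (-435837446379650500992) * x^8 + (-451649871903477352320) * x^9 + (-347690796468944607360) * x^10 + (-192749169294261895680) * x^11 + (-72719473233697081344) * x^12 + (-16708282146195922944) * x^13 + (-1763506835359727616) * x^14) + k * ((2755164376485675 + 65515788139125555 * x + 715854238470119169 * x^2 + 4764474226795297410 * x^3 + 21580172302042741572 * x^4 + 70362864492230008944 * x^5 + 170293083145302410784 * x^6 + 310738404534986004480 * x^7 + 429523966963243604160 * x^8 + 447499643847509175552 * x^9 + 345865185083985530112 * x^10 + 192267043815069780480 * x^11 + 72661705277962420224 * x^12 + 16708282146195922944 * x^13 + 1763506835359727616 * x^14) + k * ((1060653530561625 + 19606090183504650 * x + 165924987747895710 * x^2 + 849051105140970504 * x^3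 + 2922301852921728432 * x^4 + 7119260748854375040 * x^5 + 12574987224783638400 * x^6 + 16211144762646427008 * x^7 + 15125017683164285952 * x^8 + 9952068012434468352 * x^9 + 4380296528026317312 * x^10 + 1157101150061076480 * x^11 + 138643093763186688 * x^12) + k * (((-598061496272625) + (-11478415113635400) * x + (-100174454589938580) * x^2 + (-525558600439071696) * x^3 + (-1845606947103732816) * x^4 + (-4568695953060756096) * x^5 + (-8171395483710500352) * x^6 + (-10635166315571065344) * x^7 + (-9992249022073241088) * x^8 + (-6606447601992459264) * x^9 + (-2916295032432651264) * x^10 + (-771400766707384320) * x^11 + (-92428729175457792) * x^12) + k * (((-182336762153700) + (-2677764446723520) * x + (-17646743802251376) * x^2 + (-68681972091398976) * x^3 + (-174666725172072000) * x^4 + (-302933358084519936) * x^5 + (-362425029522944256) * x^6 + (-294974953160223744) * x^7 + (-156110260234254336) * x^8 + (-48453267938033664) * x^9 + (-6690262145531904) * x^10) + k * ((79759845603900 + 1209667960952640 * x + 8189846086239792 * x^2 + 32582954898959328 * x^3 + 84313535902731648 * x^4 + 148182149181581568 * x^5 + 179006831082323712 * x^6 + 146652604366874112 * x^7 + 77918923404407808 * x^8 + 24226633969016832 * x^9 + 3345131072765952 * x^10) + k * ((15001319718000 + 170520080320800 * x + 838736634889440 * x^2 + 2333659297610880 * x^3 + 4016583120764160 * x^4 + 4374524364917760 * x^5 + 2939941815667200 * x^6 + 1113162950983680 * x^7 + 181608950292480 * x^8) + k * (((-5580406062000) + (-64676826345600) * x + (-323565750705600) * x^2 + (-912699256292352)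 * x^3 + (-1586928334355712) * x^4 + (-1740112180660224) * x^5 + (-1174037213205504) * x^6 + (-445265180393472) * x^7 + (-72643580116992) * x^8) + k * (((-458314718400) + (-3852224490240) * x + (-13013349000192) * x^2 + (-22652141184000) * x^3 + (-21496269763584) * x^4 + (-10579162152960) * x^5 + (-2115832430592) * x^6) + k * ((152771572800 + 1284074830080 * x + 4337783000064 * x^2 + 7550713728000 * x^3 + 7165423254528 * x^4 + 3526387384320 * x^5 + 705277476864 * x^6)))))))))))))"

lemma certificate_identity:
  "(4 * k + 1) * (7 * q_poly x 0 * e_poly x - 81 * n_poly x * q_poly x k)
     = - r_poly x k * cert x (k + 1) - s_poly x k * cert x k"
  unfolding cert_def q_poly_def e_poly_def n_poly_def r_poly_def s_poly_def by algebra

definition antidiff :: "nat \<Rightarrow> nat \<Rightarrow> real" where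
  "antidiff n k = s_poly (real n) (real k) * cert (real n) (real k)
                  / (7 * q_poly (real n) 0 * e_poly (real n)) * shifted n k"

lemma creative_telescoping:
  "summand (Suc n) k - ratio n * summand n k = antidiff n (Suc k) - antidiff n k"
proof -
  let ?x = "real n" and ?k = "real k"
  define B where "B = shifted n k"
  define DE where "DE = 7 * q_poly ?x 0 * e_poly ?x"
  have nz: "q_poly ?x 0 \<noteq> 0" "e_poly ?x \<noteq> 0" "s_poly ?x (?k + 1) \<noteq> 0"
    using q_poly_0_nonzero e_poly_nonzero s_poly_pos[of ?x "?k + 1"] by auto
  have summand_n: "summand n k = (4 * ?k + 1) * B * q_poly ?x ?k / q_poly ?x 0"
    using summand_shifted[of n k] nz unfolding B_def by (simp add: field_simps)
  have "summand (Suc n) k - ratio n * summand n k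
      = B * ((4 * ?k + 1) * (7 * q_poly ?x 0 * e_poly ?x - 81 * n_poly ?x * q_poly ?x ?k)) / DE"
    unfolding summand_Suc summand_n ratio_eq DE_def B_def using nz by (simp add: field_simps)
  also have "\<dots> = B * (- r_poly ?x ?k * cert ?x (?k + 1) - s_poly ?x ?k * cert ?x ?k) / DE"
    unfolding certificate_identity ..
  also have "\<dots> = antidiff n (Suc k) - antidiff n k"
    unfolding antidiff_def shifted_Suc DE_def B_def using nz by (simp add: field_simps)
  finally show ?thesis .
qed

lemma sum_recurrence_by_telescoping:
  fixes u v G :: "nat \<Rightarrow> 'a::comm_ring"
  assumes "\<And>k. u k - c * v k = G (Suc k) - G k" and "G 0 = 0" and "G M = 0"
  shows "(\<Sum>k<M. u k) = c * (\<Sum>k<M. v k)"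
proof -
  have "(\<Sum>k<M. u k) - c * (\<Sum>k<M. v k) = (\<Sum>k<M. u k - c * v k)"
    by (simp add: sum_subtractf sum_distrib_left)
  also have "\<dots> = (\<Sum>k<M. G (Suc k) - G k)"
    by (simp add: assms(1))
  also have "\<dots> = 0"
    by (simp add: sum_lessThan_telescope assms(2,3))
  finally show ?thesis by simp
qed

definition hsum :: "nat \<Rightarrow> real" where
  "hsum n = (\<Sum>k<3 * n + 1. summand n k)"

lemma hsum_extend: "3 * n + 1 \<le> M \<Longrightarrow> (\<Sum>k<M. summand n k) = hsum n"
  unfolding hsum_def by (rule sum.mono_neutral_right) (auto intro: summand_vanishes)

lemma hsum_Suc: "hsum (Suc n) = ratio n * hsum n"
proof -
  have "(\<Sum>k<3 * n + 4. summand (Suc n) k) = ratio n * (\<Sum>k<3 * n + 4. summand n k)"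
  proof (rule sum_recurrence_by_telescoping)
    show "summand (Suc n) k - ratio n * summand n k = antidiff n (Suc k) - antidiff n k" for k
      by (rule creative_telescoping)
    show "antidiff n 0 = 0" by (simp add: antidiff_def s_poly_def)
    show "antidiff n (3 * n + 4) = 0" by (simp add: antidiff_def shifted_vanishes)
  qed
  then show ?thesis
    using hsum_extend[of "Suc n" "3 * n + 4"] hsum_extend[of n "3 * n + 4"] by simp
qed

definition rhs :: "nat \<Rightarrow> real" where
  "rhs n = ((2^8 * 3^3 / 7^7) ^ n *
           (pochhammer (11/12) n * pochhammer (5/6) n * pochhammer (1/2) n *
            pochhammer (5/12) n * (pochhammer (7/6) n)^2)
         / (pochhammer (11/21) n * pochhammer (23/21) n * pochhammer (5/21) n *
            pochhammer (17/21) n * pochhammer (8/21) n * pochhammer (20/21) n))"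

lemma rhs_Suc: "rhs (Suc n) = ratio n * rhs n"
proof -
  have "pochhammer (11/21) n > (0::real)" "pochhammer (23/21) n > (0::real)"
       "pochhammer (5/21) n > (0::real)" "pochhammer (17/21) n > (0::real)"
       "pochhammer (8/21) n > (0::real)" "pochhammer (20/21) n > (0::real)"
       "11/21 + real n > 0" "23/21 + real n > 0" "5/21 + real n > 0"
       "17/21 + real n > 0" "8/21 + real n > 0" "20/21 + real n > 0"
    by (simp_all add: pochhammer_pos)
  then show ?thesis
    unfolding rhs_def ratio_def pochhammer_Suc power_Suc by (simp add: field_simps power2_eq_square)
qed

lemma hsum_eq_rhs: "hsum n = rhs n"
proof (induction n)
  case 0
  show ?case by (simp add: hsum_def rhs_def summand_def hterm_def)
next
  case (Suc n)
  then show ?case by (simp add: hsum_Suc rhs_Suc)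
qed

theorem theorem11:
  fixes n :: nat
  shows "(\<lambda>k. (-1) ^ k * (4 * real k + 1) *
            (pochhammer (- 3 * real n) k * pochhammer (- 4 * real n - 1/6) k * pochhammer (1/2) k)
          / (fact k * pochhammer (3 * real n + 3/2) k * pochhammer (4 * real n + 5/3) k))
     sums ((2^8 * 3^3 / 7^7) ^ n *
           (pochhammer (11/12) n * pochhammer (5/6) n * pochhammer (1/2) n *
            pochhammer (5/12) n * (pochhammer (7/6) n)^2)
         / (pochhammer (11/21) n * pochhammer (23/21) n * pochhammer (5/21) n *
            pochhammer (17/21) n * pochhammer (8/21) n * pochhammer (20/21) n))"
proof -
  have summand_eq: "(\<lambda>k. (-1) ^ k * (4 * real k + 1) *
            (pochhammer (- 3 * real n) k * pochhammer (- 4 * real n - 1/6) k * pochhammer (1/2) k)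
          / (fact k * pochhammer (3 * real n + 3/2) k * pochhammer (4 * real n + 5/3) k))
        = summand n"
    by (simp add: fun_eq_iff summand_def hterm_def)
  have "summand n sums hsum n"
    unfolding hsum_def by (rule sums_finite) (auto intro: summand_vanishes)
  then show ?thesis
    unfolding summand_eq hsum_eq_rhs rhs_def .
qed

end
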